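(* There exists a pair of SBP operators $D_+, D_-$ (in the sense defined in the context) which is nullspace consistent but does not have the eigenvalue property. That is, there exist $n$, an interval $[a,b]$, and data $D_+, D_-, H, S, \mathbf{p}_0, \mathbf{p}_n, \mathbf{x}$ satisfying conditions (A)–(E) for some order $q\ge 1$, such that $\ker D_+ = \operatorname{span}\{\mathbf{1}\}$, but the matrix $\tilde D_+ = D_+ + H^{-1}\mathbf{p}_0\mathbf{p}_0^\top$ has an eigenvalue with non-positive real part.
   Context: Let $[a,b]$ be an interval with $b>a$ and $n\ge 1$. For $\mathbf{x}\in\mathbb{R}^{n+1}$, $\mathbf{x}^j$ denotes elementwise exponentiation, with $\mathbf{x}^0=\mathbf{1}=(1,\dots,1)^\top$. Matrices $D_+, D_-\in\mathbb{R}^{(n+1)\times(n+1)}$ form a pair of SBP (summation-by-parts) operators of order $q\ge 1$ on $[a,b]$ if there exist matrices $H,S\in\mathbb{R}^{(n+1)\times(n+1)}$ and vectors $\mathbf{p}_0,\mathbf{p}_n,\mathbf{x}\in\mathbb{R}^{n+1}$ such that: (A) $D_\pm \mathbf{x}^j = j\mathbf{x}^{j-1}$, $\mathbf{p}_0^\top\mathbf{x}^j = a^j$, $\mathbf{p}_n^\top \mathbf{x}^j = b^j$ for $j=0,\dots,q$ (with $0\cdot\mathbf{x}^{-1}:=\mathbf{0}$); (B) $H=H^\top$ is positive definite; (C) $HD_+ + D_+^\top H = -\mathbf{p}_0\mathbf{p}_0^\top + \mathbf{p}_n\mathbf{p}_n^\top + S$ with $S=S^\top$ positive semidefinite; (D)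 $HD_+ + D_-^\top H = -\mathbf{p}_0\mathbf{p}_0^\top + \mathbf{p}_n\mathbf{p}_n^\top$; (E) $\mathbf{x}=(x_0,\dots,x_n)^\top$ with $x_i\ne x_j$ for $i\ne j$. The SBP operator is called nullspace consistent if $\ker D_+=\operatorname{span}\{\mathbf{1}\}$. Set $\tilde D_+ := D_+ + H^{-1}\mathbf{p}_0\mathbf{p}_0^\top$. The SBP operator has the eigenvalue property if every eigenvalue of $\tilde D_+$ has strictly positive real part. *)

theory Defs
  imports "Jordan_Normal_Form.Matrix" "Jordan_Normal_Form.Char_Poly" "Jordan_Normal_Form.Matrix_Kernel"
begin

definition vpow :: "real vec \<Rightarrow> nat \<Rightarrow> real vec" where
  "vpow x j = vec (dim_vec x) (\<lambda>i. (x $ i) ^ j)"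

definition outer :: "real vec \<Rightarrow> real vec \<Rightarrow> real mat" where
  "outer p r = mat (dim_vec p) (dim_vec r) (\<lambda>(i,j). p $ i * r $ j)"

definition pos_def_mat :: "real mat \<Rightarrow> bool" where
  "pos_def_mat A \<longleftrightarrow> A \<in> carrier_mat (dim_row A) (dim_row A) \<and> A\<^sup>T = A \<and>
     (\<forall>v \<in> carrier_vec (dim_row A). v \<noteq> 0\<^sub>v (dim_row A) \<longrightarrow> v \<bullet> (A *\<^sub>v v) > 0)"

definition pos_semidef_mat :: "real mat \<Rightarrow> bool" where
  "pos_semidef_mat A \<longleftrightarrow> A \<in> carrier_mat (dim_row A) (dim_row A) \<and> A\<^sup>T = A \<and>
     (\<forall>v \<in> carrier_vec (dim_row A). v \<bullet> (A *\<^sub>v v) \<ge> 0)"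

definition SBP_pair ::
  "nat \<Rightarrow> nat \<Rightarrow> real \<Rightarrow> real \<Rightarrow> real mat \<Rightarrow> real mat \<Rightarrow> real mat \<Rightarrow> real mat
     \<Rightarrow> real vec \<Rightarrow> real vec \<Rightarrow> real vec \<Rightarrow> bool" where
  "SBP_pair n q a b Dp Dm H S p0 pn x \<longleftrightarrow>
     (let N = n + 1 in
      Dp \<in> carrier_mat N N \<and> Dm \<in> carrier_mat N N \<and> H \<in> carrier_mat N N \<and> S \<in> carrier_mat N N \<and>
      p0 \<in> carrier_vec N \<and> pn \<in> carrier_vec N \<and> x \<in> carrier_vec N \<and>
      \<comment> \<open>(A)\<close>
      (\<forall>j \<le> q. Dp *\<^sub>v vpow x j = (if j = 0 then 0\<^sub>v N else of_nat j \<cdot>\<^sub>v vpow x (j - 1)) \<and>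
                Dm *\<^sub>v vpow x j = (if j = 0 then 0\<^sub>v N else of_nat j \<cdot>\<^sub>v vpow x (j - 1)) \<and>
                p0 \<bullet> vpow x j = a ^ j \<and> pn \<bullet> vpow x j = b ^ j) \<and>
      \<comment> \<open>(B)\<close>
      pos_def_mat H \<and>
      \<comment> \<open>(C)\<close>
      H * Dp + Dp\<^sup>T * H = - outer p0 p0 + outer pn pn + S \<and> pos_semidef_mat S \<and>
      \<comment> \<open>(D)\<close>
      H * Dp + Dm\<^sup>T * H = - outer p0 p0 + outer pn pn \<and>
      \<comment> \<open>(E)\<close>
      (\<forall>i < N. \<forall>j < N. i \<noteq> j \<longrightarrow> x $ i \<noteq> x $ j))"

definition nullspace_consistent :: "real mat \<Rightarrow> bool" where
  "nullspace_consistent Dp \<longleftrightarrow>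
     mat_kernel Dp = {c \<cdot>\<^sub>v vec (dim_col Dp) (\<lambda>_. 1) | c. True}"

definition eigenvalue_property :: "real mat \<Rightarrow> real mat \<Rightarrow> real vec \<Rightarrow> bool" where
  "eigenvalue_property Dp H p0 \<longleftrightarrow>
     (\<forall>Hinv. inverts_mat H Hinv \<and> inverts_mat Hinv H \<longrightarrow>
        (\<forall>ev. eigenvalue (map_mat complex_of_real (Dp + Hinv * outer p0 p0)) ev \<longrightarrow> Re ev > 0))"

end

theory Submission imports Defs begin

text \<open>
  On the nodes x = (0,1,2,3) of [0,3] take the first-order operator D with D_- = D_+ = D and
  S = 0, together with a non-diagonal norm H for which H D + D^T H = -e_0 e_0^T + e_3 e_3^T.
  Its kernel consists of the constants only, yet D + H^-1 e_0 e_0^T has the purely imaginary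
  eigenvalue i, with eigenvector (0, 5, 1 + 3i, 0). Positive definiteness of H is witnessed
  by a sum-of-squares decomposition of its quadratic form.
\<close>

lemma pos_semidef_mat_zero: "pos_semidef_mat (0\<^sub>m n n)"
  unfolding pos_semidef_mat_def by (auto simp: mult_mat_vec_def scalar_prod_def)

lemma SBP_pair_nondissipative:
  assumes carrier: "D \<in> carrier_mat (n+1) (n+1)" "H \<in> carrier_mat (n+1) (n+1)"
    "p0 \<in> carrier_vec (n+1)" "pn \<in> carrier_vec (n+1)" "x \<in> carrier_vec (n+1)"
    and "\<forall>j \<le> q. D *\<^sub>v vpow x j = (if j = 0 then 0\<^sub>v (n+1) else of_nat j \<cdot>\<^sub>v vpow x (j - 1)) \<and>
                p0 \<bullet> vpow x j = a ^ j \<and> pn \<bullet> vpow x j = b ^ j"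
    and "pos_def_mat H"
    and boundary: "H * D + D\<^sup>T * H = - outer p0 p0 + outer pn pn"
    and "\<forall>i < n+1. \<forall>j < n+1. i \<noteq> j \<longrightarrow> x $ i \<noteq> x $ j"
  shows "SBP_pair n q a b D D H (0\<^sub>m (n+1) (n+1)) p0 pn x"
proof -
  have "outer pn pn \<in> carrier_mat (n+1) (n+1)"
    using carrier by (simp add: outer_def)
  then have "H * D + D\<^sup>T * H = - outer p0 p0 + outer pn pn + 0\<^sub>m (n+1) (n+1)"
    using boundary carrier by (simp add: outer_def)
  then show ?thesis
    using assms pos_semidef_mat_zero unfolding SBP_pair_def Let_def by auto
qed

lemma not_eigenvalue_property_if_eigenvalue:
  assumes "inverts_mat H Hinv" "inverts_mat Hinv H"
    and "eigenvalue (map_mat complex_of_real (D + Hinv * outer p0 p0)) ev" "Re ev \<le> 0"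
  shows "\<not> eigenvalue_property D H p0"
  using assms unfolding eigenvalue_property_def by force

lemma weighted_sum_of_squares_pos:
  fixes s t u w :: real
  assumes "0 < \<alpha>" "0 < \<beta>" "0 < \<gamma>" "0 < \<delta>" "s \<noteq> 0 \<or> t \<noteq> 0 \<or> u \<noteq> 0 \<or> w \<noteq> 0"
  shows "0 < \<alpha> * s\<^sup>2 + \<beta> * t\<^sup>2 + \<gamma> * u\<^sup>2 + \<delta> * w\<^sup>2"
proof -
  have "0 \<le> \<alpha> * s\<^sup>2" "0 \<le> \<beta> * t\<^sup>2" "0 \<le> \<gamma> * u\<^sup>2" "0 \<le> \<delta> * w\<^sup>2"
    using assms(1-4) by simp_all
  moreover have "0 < \<alpha> * s\<^sup>2 \<or> 0 < \<beta> * t\<^sup>2 \<or> 0 < \<gamma> * u\<^sup>2 \<or> 0 < \<delta> * w\<^sup>2"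
    using assms by auto
  ultimately show ?thesis
    by linarith
qed

lemma sum_atLeast0_lessThan_4: "(\<Sum>i\<in>{0..<4::nat}. f i) = f 0 + f 1 + f 2 + f 3"
  by (simp add: numeral_eq_Suc atLeast0_lessThan_Suc add.commute add.left_commute)

lemma less_4_cases: "i < (4::nat) \<Longrightarrow> i = 0 \<or> i = 1 \<or> i = 2 \<or> i = 3"
  by auto

lemmas entry_simps = scalar_prod_def sum_atLeast0_lessThan_4 row_def col_def

definition H_ex :: "real mat" where
  "H_ex = mat 4 4 (\<lambda>(i,j). [[7/2,-1,-1,0], [-1,2,-1,0], [-1,-1,5,-3], [0,0,-3,9/2]] ! i ! j)"

definition H_ex_inv :: "real mat" where
  "H_ex_inv = mat 4 4 (\<lambda>(i,j). [[10/21,8/21,6/21,4/21], [8/21,19/21,9/21,6/21],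
                                [6/21,9/21,12/21,8/21], [4/21,6/21,8/21,10/21]] ! i ! j)"

definition D_ex :: "real mat" where
  "D_ex = mat 4 4 (\<lambda>(i,j). [[-1/3,0,0,1/3], [-2/3,-1/3,5/3,-2/3], [0,-2/3,1/3,1/3], [-1/3,0,0,1/3]] ! i ! j)"

definition e_first :: "real vec" where "e_first = vec 4 (\<lambda>i. [1,0,0,0] ! i)"

definition e_last :: "real vec" where "e_last = vec 4 (\<lambda>i. [0,0,0,1] ! i)"

definition nodes :: "real vec" where "nodes = vec 4 (\<lambda>i. [0,1,2,3] ! i)"

lemma H_ex_inverts: "inverts_mat H_ex H_ex_inv" "inverts_mat H_ex_inv H_ex"
  unfolding inverts_mat_def
  by (rule eq_matI; auto simp: H_ex_def H_ex_inv_def entry_simps dest!: less_4_cases)+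

lemma H_ex_quadratic_form:
  assumes "dim_vec v = 4"
  shows "v \<bullet> (H_ex *\<^sub>v v) = 9/2 * (v$3 - 2/3 * v$2)\<^sup>2 + 3 * (v$2 - (v$0 + v$1)/3)\<^sup>2
                              + 5/3 * (v$1 - 4/5 * v$0)\<^sup>2 + 21/10 * (v$0)\<^sup>2"
  using assms by (simp add: H_ex_def entry_simps power2_eq_square field_simps)

lemma pos_def_H_ex: "pos_def_mat H_ex"
  unfolding pos_def_mat_def
proof (intro conjI ballI impI)
  show "H_ex \<in> carrier_mat (dim_row H_ex) (dim_row H_ex)" "H_ex\<^sup>T = H_ex"
    by (auto intro!: eq_matI simp: H_ex_def dest!: less_4_cases)
  fix v :: "real vec"
  assume "v \<in> carrier_vec (dim_row H_ex)" "v \<noteq> 0\<^sub>v (dim_row H_ex)"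
  then have dim: "dim_vec v = 4" and "v \<noteq> 0\<^sub>v 4"
    by (auto simp: H_ex_def)
  then obtain i where "i < 4" "v $ i \<noteq> 0"
    using eq_vecI[of v "0\<^sub>v 4"] by auto
  then have "v$3 - 2/3 * v$2 \<noteq> 0 \<or> v$2 - (v$0 + v$1)/3 \<noteq> 0 \<or> v$1 - 4/5 * v$0 \<noteq> 0 \<or> v$0 \<noteq> 0"
    by (auto dest!: less_4_cases)
  then show "v \<bullet> (H_ex *\<^sub>v v) > 0"
    unfolding H_ex_quadratic_form[OF dim] by (intro weighted_sum_of_squares_pos) simp_all
qed

lemma D_ex_boundary: "H_ex * D_ex + D_ex\<^sup>T * H_ex = - outer e_first e_first + outer e_last e_last"
  by (rule eq_matI) (auto simp: H_ex_def D_ex_def e_first_def e_last_def outer_def entry_simps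
                          dest!: less_4_cases)

lemma vpow_nodes: "vpow nodes 0 = vec 4 (\<lambda>_. 1)" "vpow nodes 1 = nodes"
  by (auto intro!: eq_vecI simp: vpow_def nodes_def)

lemma D_ex_exact_order_1:
  "\<forall>j \<le> 1. D_ex *\<^sub>v vpow nodes j = (if j = 0 then 0\<^sub>v 4 else of_nat j \<cdot>\<^sub>v vpow nodes (j - 1)) \<and>
           e_first \<bullet> vpow nodes j = 0 ^ j \<and> e_last \<bullet> vpow nodes j = 3 ^ j"
proof -
  have "D_ex *\<^sub>v vpow nodes 0 = 0\<^sub>v 4" "D_ex *\<^sub>v vpow nodes 1 = vpow nodes 0"
    unfolding vpow_nodes
    by (auto intro!: eq_vecI simp: D_ex_def nodes_def entry_simps dest!: less_4_cases)
  moreover have "e_first \<bullet> vpow nodes 0 = 1" "e_last \<bullet> vpow nodes 0 = 1"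
    "e_first \<bullet> vpow nodes 1 = 0" "e_last \<bullet> vpow nodes 1 = 3"
    unfolding vpow_nodes by (auto simp: e_first_def e_last_def nodes_def entry_simps)
  ultimately show ?thesis
    by (auto simp: le_Suc_eq)
qed

lemma nodes_distinct: "\<forall>i < 4. \<forall>j < 4. i \<noteq> j \<longrightarrow> nodes $ i \<noteq> nodes $ j"
  by (auto simp: nodes_def dest!: less_4_cases)

lemma D_ex_nullspace_consistent: "nullspace_consistent D_ex"
  unfolding nullspace_consistent_def
proof (intro equalityI subsetI)
  fix v :: "real vec"
  assume "v \<in> mat_kernel D_ex"
  then have dim: "dim_vec v = 4" and Dv: "D_ex *\<^sub>v v = 0\<^sub>v 4"
    by (auto simp: mat_kernel_def D_ex_def)
  have "(D_ex *\<^sub>v v)$0 = -1/3 * v$0 + 1/3 * v$3"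
    "(D_ex *\<^sub>v v)$1 = -2/3 * v$0 - 1/3 * v$1 + 5/3 * v$2 - 2/3 * v$3"
    "(D_ex *\<^sub>v v)$2 = -2/3 * v$1 + 1/3 * v$2 + 1/3 * v$3"
    by (simp_all add: D_ex_def entry_simps dim)
  then have "v$1 = v$0" "v$2 = v$0" "v$3 = v$0"
    using Dv by (auto dest: arg_cong[where f = "\<lambda>w. w $ _"])
  then have "v = v$0 \<cdot>\<^sub>v vec (dim_col D_ex) (\<lambda>_. 1)"
    by (intro eq_vecI) (auto simp: D_ex_def dim dest!: less_4_cases)
  then show "v \<in> {c \<cdot>\<^sub>v vec (dim_col D_ex) (\<lambda>_. 1) | c. True}"
    by blast
next
  fix v :: "real vec"
  assume "v \<in> {c \<cdot>\<^sub>v vec (dim_col D_ex) (\<lambda>_. 1) | c. True}"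
  then obtain c where v: "v = c \<cdot>\<^sub>v vec 4 (\<lambda>_. 1)"
    by (auto simp: D_ex_def)
  have "D_ex *\<^sub>v v = 0\<^sub>v 4"
    unfolding v by (auto intro!: eq_vecI simp: D_ex_def entry_simps dest!: less_4_cases)
  then show "v \<in> mat_kernel D_ex"
    by (auto simp: mat_kernel_def D_ex_def v)
qed

lemma D_ex_penalized_eigenvalue_i:
  "eigenvalue (map_mat complex_of_real (D_ex + H_ex_inv * outer e_first e_first)) \<i>"
proof -
  define w :: "complex vec" where "w = vec 4 (\<lambda>i. [0, 5, 1 + 3 * \<i>, 0] ! i)"
  have "w $ 1 \<noteq> 0"
    by (simp add: w_def)
  then have "w \<noteq> 0\<^sub>v 4"
    by auto
  moreover have "map_mat complex_of_real (D_ex + H_ex_inv * outer e_first e_first) *\<^sub>v w = \<i> \<cdot>\<^sub>v w"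
    by (rule eq_vecI) (auto simp: D_ex_def H_ex_inv_def outer_def e_first_def w_def entry_simps
                            complex_eq_iff dest!: less_4_cases)
  ultimately show ?thesis
    unfolding eigenvalue_def eigenvector_def
    by (intro exI[of _ w]) (simp add: w_def D_ex_def H_ex_inv_def)
qed

theorem theorem1:
  shows "\<exists>(n::nat) (q::nat) (a::real) (b::real) Dp Dm H S p0 pn x.
           n \<ge> 1 \<and> q \<ge> 1 \<and> b > a \<and>
           SBP_pair n q a b Dp Dm H S p0 pn x \<and>
           nullspace_consistent Dp \<and>
           \<not> eigenvalue_property Dp H p0"
proof -
  have "SBP_pair 3 1 0 3 D_ex D_ex H_ex (0\<^sub>m 4 4) e_first e_last nodes"
    using SBP_pair_nondissipative[of D_ex 3 H_ex e_first e_last nodes 1 0 3]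
      D_ex_exact_order_1 pos_def_H_ex D_ex_boundary nodes_distinct
    by (simp add: D_ex_def H_ex_def e_first_def e_last_def nodes_def del: vpow_def)
  moreover have "\<not> eigenvalue_property D_ex H_ex e_first"
    using not_eigenvalue_property_if_eigenvalue[OF H_ex_inverts D_ex_penalized_eigenvalue_i]
    by simp
  moreover have "(1::nat) \<le> 3" "(0::real) < 3"
    by simp_all
  ultimately show ?thesis
    using D_ex_nullspace_consistent by blast
qed

end
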